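(* Let $n$ be a nonnegative integer and $\delta\in\{1,2\}$. Suppose there exist a nonnegative integer $B$ and integers $x,y,z$ such that $$\frac{2n+(3\delta+4)B}{3}-(3\delta+4)B^2=x^2+2y^2+3\delta z^2+(x+2y+3\delta z)^2<(B+1)^2.$$ Then there exist nonnegative integers $w_0,x_0,y_0,z_0$ with $n=p_5(w_0)+p_5(x_0)+2p_5(y_0)+3\delta\, p_5(z_0)$.
   Context: For $k\in\mathbb{Z}$, $p_5(k)=k(3k-1)/2$. *)

theory Defs
  imports Complex_Main
begin

definition p5 :: "int \<Rightarrow> int" where
  "p5 k = k * (3 * k - 1) div 2"

end

theory Submission
  imports Defs
begin

text \<open>Since \<open>2 p\<^sub>5(B + t) = 2 p\<^sub>5(B) + (6B - 1) t + 3 t\<^sup>2\<close>, a weighted sum \<open>\<Sum> a\<^sub>i p\<^sub>5(B + t\<^sub>i)\<close>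
  loses its linear part when \<open>\<Sum> a\<^sub>i t\<^sub>i = 0\<close> and is then determined by \<open>\<Sum> a\<^sub>i\<close> and the
  quadratic form \<open>\<Sum> a\<^sub>i t\<^sub>i\<^sup>2\<close>.  With weights \<open>1, 1, 2, 3\<delta>\<close> and shifts \<open>-s, x, y, z\<close>, where
  \<open>s = x + 2y + 3\<delta>z\<close>, the hypothesised equation says exactly that \<open>n\<close> is this weighted sum,
  and the bound \<open>(B + 1)\<^sup>2\<close> on the quadratic form puts every shift into \<open>[-B, B]\<close>, so all
  arguments \<open>B + t\<^sub>i\<close> are nonnegative.\<close>

lemma two_p5: "2 * p5 k = k * (3 * k - 1)"
proof -
  have "even (k * (3 * k - 1))" by auto
  then show ?thesis unfolding p5_def by simp
qed

lemma two_p5_add: "2 * p5 (b + t) = 2 * p5 b + (6 * b - 1) * t + 3 * t\<^sup>2"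
  by (simp only: two_p5) (simp add: algebra_simps power2_eq_square)

lemma two_weighted_p5_shift:
  fixes b :: int and ws :: "(int \<times> int) list"
  shows "2 * (\<Sum>(a, t)\<leftarrow>ws. a * p5 (b + t))
           = 2 * p5 b * (\<Sum>(a, t)\<leftarrow>ws. a) + (6 * b - 1) * (\<Sum>(a, t)\<leftarrow>ws. a * t)
             + 3 * (\<Sum>(a, t)\<leftarrow>ws. a * t\<^sup>2)"
proof (induction ws)
  case Nil
  then show ?case by simp
next
  case (Cons w ws)
  obtain a t where w: "w = (a, t)"
    by fastforce
  have "2 * (a * p5 (b + t)) = a * (2 * p5 b + (6 * b - 1) * t + 3 * t\<^sup>2)"
    by (metis two_p5_add mult.left_commute)
  with Cons.IH show ?case
    by (simp add: w algebra_simps)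
qed

lemma weighted_square_le_sum_list:
  fixes ws :: "(int \<times> int) list"
  assumes "\<forall>(a, t) \<in> set ws. 0 \<le> a" "(a, t) \<in> set ws"
  shows "a * t\<^sup>2 \<le> (\<Sum>(a, t)\<leftarrow>ws. a * t\<^sup>2)"
  using assms
proof (induction ws)
  case Nil
  then show ?case by simp
next
  case (Cons w ws)
  obtain a' t' where w: "w = (a', t')"
    by fastforce
  have "0 \<le> (\<Sum>(a, t)\<leftarrow>ws. a * t\<^sup>2)"
    using Cons.prems(1) by (intro sum_list_nonneg) auto
  moreover have "0 \<le> a' * t'\<^sup>2"
    using Cons.prems(1) w by simp
  ultimately show ?case
    using Cons w by (auto intro: add_increasing add_increasing2 simp del: zero_le_mult_iff)
qed

lemma abs_le_of_power2_less:
  fixes a b :: int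
  assumes "a\<^sup>2 < (b + 1)\<^sup>2" "0 \<le> b"
  shows "\<bar>a\<bar> \<le> b"
proof -
  have "\<bar>a\<bar>\<^sup>2 < (b + 1)\<^sup>2" using assms(1) by simp
  then have "\<bar>a\<bar> < b + 1" using assms(2) power_less_imp_less_base by fastforce
  then show ?thesis by simp
qed

lemma abs_le_of_weighted_squares_less:
  fixes ws :: "(int \<times> int) list" and b :: int
  assumes "\<forall>(a, t) \<in> set ws. 1 \<le> a" "(\<Sum>(a, t)\<leftarrow>ws. a * t\<^sup>2) < (b + 1)\<^sup>2" "0 \<le> b"
    and "(a, t) \<in> set ws"
  shows "\<bar>t\<bar> \<le> b"
proof -
  have "1 \<le> a"
    using assms(1,4) by auto
  then have "t\<^sup>2 \<le> a * t\<^sup>2"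
    using mult_right_mono[of 1 a "t\<^sup>2"] by simp
  also have "\<dots> \<le> (\<Sum>(a, t)\<leftarrow>ws. a * t\<^sup>2)"
    using assms(1,4) by (intro weighted_square_le_sum_list) auto
  also have "\<dots> < (b + 1)\<^sup>2"
    by (fact assms(2))
  finally show ?thesis
    using assms(3) by (rule abs_le_of_power2_less)
qed

theorem lemma4p2:
  fixes n :: int and \<delta> :: int and B x y z :: int
  assumes "n \<ge> 0"
    and "\<delta> \<in> {1, 2}"
    and "B \<ge> 0"
    and "(2 * of_int n + (3 * of_int \<delta> + 4) * of_int B) / 3 - (3 * of_int \<delta> + 4) * (of_int B)^2
           = (of_int (x^2 + 2 * y^2 + 3 * \<delta> * z^2 + (x + 2 * y + 3 * \<delta> * z)^2) :: real)"
    and "x^2 + 2 * y^2 + 3 * \<delta> * z^2 + (x + 2 * y + 3 * \<delta> * z)^2 < (B + 1)^2"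
  shows "\<exists>w0 x0 y0 z0 :: int. w0 \<ge> 0 \<and> x0 \<ge> 0 \<and> y0 \<ge> 0 \<and> z0 \<ge> 0 \<and>
           n = p5 w0 + p5 x0 + 2 * p5 y0 + 3 * \<delta> * p5 z0"
proof -
  define s where "s = x + 2 * y + 3 * \<delta> * z"
  define ws where "ws = [(1, -s), (1, x), (2, y), (3 * \<delta>, z)]"
  define Q where "Q = x\<^sup>2 + 2 * y\<^sup>2 + 3 * \<delta> * z\<^sup>2 + s\<^sup>2"
  have Q_ws: "(\<Sum>(a, t)\<leftarrow>ws. a * t\<^sup>2) = Q"
    by (simp add: ws_def Q_def)
  have "real_of_int (2 * n + (3 * \<delta> + 4) * B - 3 * (3 * \<delta> + 4) * B\<^sup>2) = real_of_int (3 * Q)"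
    using assms(4) by (simp add: Q_def s_def field_simps)
  then have "2 * n = 2 * p5 B * (3 * \<delta> + 4) + 3 * Q"
    unfolding of_int_eq_iff two_p5 by algebra
  also have "\<dots> = 2 * p5 B * (\<Sum>(a, t)\<leftarrow>ws. a) + 3 * (\<Sum>(a, t)\<leftarrow>ws. a * t\<^sup>2)"
    unfolding Q_ws by (simp add: ws_def add.commute)
  also have "\<dots> = 2 * (\<Sum>(a, t)\<leftarrow>ws. a * p5 (B + t))"
    using two_weighted_p5_shift[of B ws] by (simp add: ws_def s_def)
  finally have n_eq: "n = p5 (B - s) + p5 (B + x) + 2 * p5 (B + y) + 3 * \<delta> * p5 (B + z)"
    by (simp add: ws_def)
  have shift_bound: "\<bar>t\<bar> \<le> B" if "(a, t) \<in> set ws" for a t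
  proof (rule abs_le_of_weighted_squares_less[OF _ _ assms(3) that])
    show "\<forall>(a, t) \<in> set ws. 1 \<le> a"
      using assms(2) by (auto simp: ws_def)
    show "(\<Sum>(a, t)\<leftarrow>ws. a * t\<^sup>2) < (B + 1)\<^sup>2"
      unfolding Q_ws Q_def s_def by (fact assms(5))
  qed
  have "\<bar>s\<bar> \<le> B" "\<bar>x\<bar> \<le> B" "\<bar>y\<bar> \<le> B" "\<bar>z\<bar> \<le> B"
    using shift_bound[of 1 "-s"] shift_bound[of 1 x] shift_bound[of 2 y] shift_bound[of "3 * \<delta>" z]
    by (simp_all add: ws_def)
  with n_eq show ?thesis
    by (intro exI[of _ "B - s"] exI[of _ "B + x"] exI[of _ "B + y"] exI[of _ "B + z"])
      (simp add: abs_le_iff)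
qed

end
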